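(* Let $X,Y$ be a section-pair with $m$ chords, and suppose that each vertex of $X$ is incident to at most one chord. Then either there is a family of $m/2$ pairwise-interlacing chords, or there are pairs of distinct chords $(e_i,e'_i)$, $e_i=(x_i,y_i)$, $e'_i=(x'_i,y'_i)$ (with $x_i,x'_i\in X$, $y_i,y'_i\in Y$), $i=1,\dots,t$, such that: (1) for every $1\le i\le t$, $e_i,e'_i$ are either parallel or share their vertex in $Y$ (i.e. $y_i=y'_i$); (2) for every $1\le i<j\le t$, both $e_i$ and $e'_i$ interlace both $e_j$ and $e'_j$; (3) $\sum_{i=1}^t d_X(x_i,x'_i)\ge m/4$.
   Context: A section-pair in a graph $G$ is a pair $X,Y$ of vertex-disjoint paths; the two endpoints of $X$ are designated its top $x^{t}$ and bottom $x^{b}$, and those of $Y$ its top $y^t$ and bottom $y^b$. For distinct $x_1,x_2\in X$, $x_1$ is above $x_2$ if $x_1$ is closer to $x^t$ along $X$ than $x_2$, otherwise below; similarly in $Y$. A chord is an edge of $G$ with one endpoint in $X$ and one in $Y$. For $x_1,x_2\in X$, $d_X(x_1,x_2)$ is the number of edges of the subpath of $X$ between $x_1$ and $x_2$. Two chords $(x_1,y_1),(x_2,y_2)$ ($x_i\in X,y_i\in Y$) with no common vertex are parallel if for some $i\in\{1,2\}$, $x_i$ is above $x_{3-i}$ and $y_i$ is above $y_{3-i}$; otherwise they are interlacing. *)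

theory Defs
  imports Main
begin

definition simple_graph :: "('a \<Rightarrow> 'a \<Rightarrow> bool) \<Rightarrow> bool" where
  "simple_graph E \<longleftrightarrow> (\<forall>u v. E u v \<longrightarrow> E v u) \<and> (\<forall>v. \<not> E v v)"

(* A path is a nonempty list of distinct vertices, consecutive ones adjacent;
   its first element is the top, its last element the bottom. *)
definition is_path :: "('a \<Rightarrow> 'a \<Rightarrow> bool) \<Rightarrow> 'a list \<Rightarrow> bool" where
  "is_path E P \<longleftrightarrow> P \<noteq> [] \<and> distinct P \<and> (\<forall>i. Suc i < length P \<longrightarrow> E (P ! i) (P ! Suc i))"

definition section_pair :: "('a \<Rightarrow> 'a \<Rightarrow> bool) \<Rightarrow> 'a list \<Rightarrow> 'a list \<Rightarrow> bool" where
  "section_pair E X Y \<longleftrightarrow> is_path E X \<and> is_path E Y \<and> set X \<inter> set Y = {}"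

definition pos :: "'a list \<Rightarrow> 'a \<Rightarrow> nat" where
  "pos P v = (THE i. i < length P \<and> P ! i = v)"

definition above :: "'a list \<Rightarrow> 'a \<Rightarrow> 'a \<Rightarrow> bool" where
  "above P a b \<longleftrightarrow> a \<in> set P \<and> b \<in> set P \<and> pos P a < pos P b"

definition dpath :: "'a list \<Rightarrow> 'a \<Rightarrow> 'a \<Rightarrow> nat" where
  "dpath P a b = nat \<bar>int (pos P a) - int (pos P b)\<bar>"

definition chords :: "('a \<Rightarrow> 'a \<Rightarrow> bool) \<Rightarrow> 'a list \<Rightarrow> 'a list \<Rightarrow> ('a \<times> 'a) set" where
  "chords E X Y = {(x, y). x \<in> set X \<and> y \<in> set Y \<and> E x y}"

definition no_common_vertex :: "'a \<times> 'a \<Rightarrow> 'a \<times> 'a \<Rightarrow> bool" where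
  "no_common_vertex e f \<longleftrightarrow> fst e \<noteq> fst f \<and> snd e \<noteq> snd f"

definition parallel :: "'a list \<Rightarrow> 'a list \<Rightarrow> 'a \<times> 'a \<Rightarrow> 'a \<times> 'a \<Rightarrow> bool" where
  "parallel X Y e f \<longleftrightarrow> no_common_vertex e f \<and>
     ((above X (fst e) (fst f) \<and> above Y (snd e) (snd f)) \<or>
      (above X (fst f) (fst e) \<and> above Y (snd f) (snd e)))"

definition interlacing :: "'a list \<Rightarrow> 'a list \<Rightarrow> 'a \<times> 'a \<Rightarrow> 'a \<times> 'a \<Rightarrow> bool" where
  "interlacing X Y e f \<longleftrightarrow> no_common_vertex e f \<and> \<not> parallel X Y e f"

end

theory Submission
  imports Defs
begin

(* Induct on the chords, handling first the chord c whose end on X is lowest.  If c's end on Y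
   is strictly above the Y-ends of all other chords, c interlaces every other chord and joins the
   interlacing family.  Otherwise take, among the chords reaching Y no lower than c, the one u
   whose end on X is highest.  Every chord strictly above u on X then interlaces both u and c;
   recurse on those chords and add u to the family and (u, c) to the list of pairs.  The chords
   discarded, those between u and c on X, number at most d_X(u, c) + 1, so the size of the
   family plus the sum of the distances always accounts for all m chords. *)

lemma pos_nth:
  assumes "distinct P" "x \<in> set P"
  shows "pos P x < length P" "P ! pos P x = x"
proof -
  obtain i where i: "i < length P" "P ! i = x"
    using assms(2) by (auto simp: in_set_conv_nth)
  have "pos P x = i"
    unfolding pos_def by (rule the_equality) (use i assms(1) nth_eq_iff_index_eq in auto)
  with i show "pos P x < length P" "P ! pos P x = x" by simp_all
qed

lemma inj_on_pos: "distinct P \<Longrightarrow> inj_on (pos P) (set P)"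
  by (rule inj_onI) (metis pos_nth(2))

lemma interlacing_commute: "interlacing X Y e f \<longleftrightarrow> interlacing X Y f e"
  by (auto simp: interlacing_def parallel_def no_common_vertex_def)

lemma interlacing_if_crossing:
  "pos X (fst e) < pos X (fst f) \<Longrightarrow> pos Y (snd f) < pos Y (snd e) \<Longrightarrow> interlacing X Y e f"
  by (auto simp: interlacing_def parallel_def no_common_vertex_def above_def)

lemma parallel_if_same_order:
  "e \<in> set X \<times> set Y \<Longrightarrow> f \<in> set X \<times> set Y \<Longrightarrow>
   pos X (fst e) < pos X (fst f) \<Longrightarrow> pos Y (snd e) < pos Y (snd f) \<Longrightarrow> parallel X Y e f"
  by (auto simp: parallel_def no_common_vertex_def above_def)

lemma inj_on_fst_if_fibres_le_1:
  assumes "finite C" "\<And>x. x \<in> fst ` C \<Longrightarrow> card {e \<in> C. fst e = x} \<le> 1"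
  shows "inj_on fst C"
proof (rule inj_onI)
  fix d d' assume "d \<in> C" "d' \<in> C" "fst d = fst d'"
  let ?A = "{e \<in> C. fst e = fst d}"
  have "finite ?A"
    using assms(1) by simp
  moreover have "card ?A \<le> Suc 0"
    using assms(2) \<open>d \<in> C\<close> by simp
  ultimately have "\<forall>a\<in>?A. \<forall>b\<in>?A. a = b"
    by (simp only: card_le_Suc0_iff_eq)
  moreover have "d \<in> ?A" "d' \<in> ?A"
    using \<open>d \<in> C\<close> \<open>d' \<in> C\<close> \<open>fst d = fst d'\<close> by simp_all
  ultimately show "d = d'"
    by blast
qed

definition interlaced_pairs ::
    "'a list \<Rightarrow> 'a list \<Rightarrow> ('a \<times> 'a) set \<Rightarrow> nat \<Rightarrow> (nat \<Rightarrow> 'a \<times> 'a) \<Rightarrow> (nat \<Rightarrow> 'a \<times> 'a) \<Rightarrow> bool"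
  where
  "interlaced_pairs X Y C t e e' \<longleftrightarrow>
     (\<forall>i \<in> {1..t}. e i \<in> C \<and> e' i \<in> C \<and> e i \<noteq> e' i) \<and>
     (\<forall>i \<in> {1..t}. parallel X Y (e i) (e' i) \<or> snd (e i) = snd (e' i)) \<and>
     (\<forall>i \<in> {1..t}. \<forall>j \<in> {1..t}. i < j \<longrightarrow>
          interlacing X Y (e i) (e j) \<and> interlacing X Y (e i) (e' j) \<and>
          interlacing X Y (e' i) (e j) \<and> interlacing X Y (e' i) (e' j))"

lemma interlaced_pairs_mono:
  "interlaced_pairs X Y P t e e' \<Longrightarrow> P \<subseteq> C \<Longrightarrow> interlaced_pairs X Y C t e e'"
  unfolding interlaced_pairs_def by blast

lemma interlaced_pairs_snoc:
  assumes pairs: "interlaced_pairs X Y P t e e'" and "P \<subseteq> C"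
    and "u \<in> C" "c \<in> C" "u \<noteq> c" "parallel X Y u c \<or> snd u = snd c"
    and inter: "\<forall>g\<in>P. interlacing X Y g u \<and> interlacing X Y g c"
  shows "interlaced_pairs X Y C (Suc t) (e(Suc t := u)) (e'(Suc t := c))"
proof -
  have old: "e i \<in> P \<and> e' i \<in> P" if "i \<in> {1..t}" for i
    using pairs that unfolding interlaced_pairs_def by blast
  have cases: "i \<in> {1..Suc t} \<Longrightarrow> i \<in> {1..t} \<or> i = Suc t" for i
    by auto
  have "(e(Suc t := u)) i \<in> C \<and> (e'(Suc t := c)) i \<in> C \<and> (e(Suc t := u)) i \<noteq> (e'(Suc t := c)) i \<and>
      (parallel X Y ((e(Suc t := u)) i) ((e'(Suc t := c)) i) \<or>
       snd ((e(Suc t := u)) i) = snd ((e'(Suc t := c)) i))" if "i \<in> {1..Suc t}" for i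
    using cases[OF that] assms old unfolding interlaced_pairs_def by auto
  moreover have "interlacing X Y ((e(Suc t := u)) i) ((e(Suc t := u)) j) \<and>
      interlacing X Y ((e(Suc t := u)) i) ((e'(Suc t := c)) j) \<and>
      interlacing X Y ((e'(Suc t := c)) i) ((e(Suc t := u)) j) \<and>
      interlacing X Y ((e'(Suc t := c)) i) ((e'(Suc t := c)) j)"
    if "i \<in> {1..Suc t}" "j \<in> {1..Suc t}" "i < j" for i j
  proof -
    have "i \<in> {1..t}" "j \<in> {1..t} \<or> j = Suc t"
      using that by auto
    then show ?thesis
      using pairs inter old \<open>i < j\<close> unfolding interlaced_pairs_def by auto
  qed
  ultimately show ?thesis
    unfolding interlaced_pairs_def by blast
qed

(* If |F| < |C|/2, the pairs alone have total X-distance above |C|/2. *)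
definition decomposable :: "'a list \<Rightarrow> 'a list \<Rightarrow> ('a \<times> 'a) set \<Rightarrow> bool" where
  "decomposable X Y C \<longleftrightarrow> (\<exists>F t e e'. F \<subseteq> C \<and> pairwise (interlacing X Y) F \<and>
     interlaced_pairs X Y C t e e' \<and>
     card C \<le> card F + (\<Sum>i = 1..t. dpath X (fst (e i)) (fst (e' i))))"

lemma decomposable_empty: "decomposable X Y {}"
  unfolding decomposable_def interlaced_pairs_def by (intro exI[of _ "{}"] exI[of _ 0]) simp

lemma decomposable_insert_interlacing:
  assumes "finite C" "c \<notin> C" "decomposable X Y C" "\<forall>d\<in>C. interlacing X Y c d"
  shows "decomposable X Y (insert c C)"
proof -
  obtain F t e e' where F: "F \<subseteq> C" "pairwise (interlacing X Y) F"
      "interlaced_pairs X Y C t e e'"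
      "card C \<le> card F + (\<Sum>i = 1..t. dpath X (fst (e i)) (fst (e' i)))"
    using assms(3) unfolding decomposable_def by blast
  have "pairwise (interlacing X Y) (insert c F)"
    using F(1,2) assms(4) by (auto simp: pairwise_insert interlacing_commute)
  moreover have "card (insert c F) = Suc (card F)"
    using F(1) assms(1,2) by (meson card_insert_disjoint finite_subset subsetD)
  ultimately show ?thesis
    unfolding decomposable_def using F assms(1,2)
    by (intro exI[of _ "insert c F"] exI[of _ t] exI[of _ e] exI[of _ e'])
       (auto intro: interlaced_pairs_mono)
qed

lemma decomposable_extend_pair:
  assumes "finite C" "P \<subseteq> C" "decomposable X Y P"
    and "u \<in> C" "c \<in> C" "u \<notin> P" "u \<noteq> c" "parallel X Y u c \<or> snd u = snd c"
    and inter: "\<forall>g\<in>P. interlacing X Y g u \<and> interlacing X Y g c"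
    and rest: "card (C - P) \<le> dpath X (fst u) (fst c) + 1"
  shows "decomposable X Y C"
proof -
  obtain F t e e' where F: "F \<subseteq> P" "pairwise (interlacing X Y) F"
      "interlaced_pairs X Y P t e e'"
      "card P \<le> card F + (\<Sum>i = 1..t. dpath X (fst (e i)) (fst (e' i)))"
    using assms(3) unfolding decomposable_def by blast
  have "pairwise (interlacing X Y) (insert u F)"
    using F(1,2) inter by (auto simp: pairwise_insert interlacing_commute)
  moreover have "card (insert u F) = Suc (card F)"
    using F(1) assms(1,2,6) by (meson card_insert_disjoint finite_subset subsetD)
  moreover have "card C \<le> card P + card (C - P)"
    using card_Un_le[of P "C - P"] assms(2) by (simp add: Un_absorb1)
  moreover have "(\<Sum>i = 1..Suc t. dpath X (fst ((e(Suc t := u)) i)) (fst ((e'(Suc t := c)) i)))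
      = (\<Sum>i = 1..t. dpath X (fst (e i)) (fst (e' i))) + dpath X (fst u) (fst c)"
    by (simp add: sum.cl_ivl_Suc)
  ultimately show ?thesis
    unfolding decomposable_def using F assms(2,4) rest
    by (intro exI[of _ "insert u F"] exI[of _ "Suc t"] exI[of _ "e(Suc t := u)"]
        exI[of _ "e'(Suc t := c)"] conjI interlaced_pairs_snoc[OF F(3)] assms(5-9)) auto
qed

lemma chord_pairing:
  assumes "finite C" "C \<subseteq> set X \<times> set Y" "distinct Y" "inj_on (\<lambda>d. pos X (fst d)) C"
    and c: "c \<in> C" "\<forall>d\<in>C. pos X (fst d) \<le> pos X (fst c)"
    and "d \<in> C" "d \<noteq> c" "pos Y (snd d) \<le> pos Y (snd c)"
  obtains u where "u \<in> C" "u \<noteq> c" "parallel X Y u c \<or> snd u = snd c"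
    "\<forall>g\<in>{d\<in>C. pos X (fst d) < pos X (fst u)}. interlacing X Y g u \<and> interlacing X Y g c"
    "card (C - {d\<in>C. pos X (fst d) < pos X (fst u)}) \<le> dpath X (fst u) (fst c) + 1"
proof -
  define px where "px d = pos X (fst d)" for d :: "'a \<times> 'a"
  define py where "py d = pos Y (snd d)" for d :: "'a \<times> 'a"
  define S where "S = {d\<in>C - {c}. py d \<le> py c}"
  have "d \<in> S"
    using assms(7-9) unfolding S_def py_def by simp
  moreover have "finite S"
    using assms(1) unfolding S_def by simp
  ultimately obtain u where u: "u \<in> S" "\<forall>d\<in>S. px u \<le> px d"
    using Min_in[of "px ` S"] Min_le[of "px ` S"] by fastforce
  have uC: "u \<in> C" "u \<noteq> c" "py u \<le> py c"
    using u(1) unfolding S_def by auto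
  have uc: "px u < px c"
    using c uC(1,2) inj_on_eq_iff[OF assms(4) uC(1) c(1)] unfolding px_def by fastforce
  define P where "P = {d\<in>C. px d < px u}"
  have above_c: "py c < py g" if "g \<in> P" for g
  proof (rule ccontr)
    assume "\<not> py c < py g"
    with that uc have "g \<in> S"
      unfolding P_def S_def by auto
    with u(2) that show False
      unfolding P_def by fastforce
  qed
  have crossing: "\<forall>g\<in>P. interlacing X Y g u \<and> interlacing X Y g c"
  proof
    fix g assume "g \<in> P"
    then have "px g < px u" "py c < py g"
      using above_c unfolding P_def by simp_all
    with uC(3) uc have "px g < px u" "py u < py g" "px g < px c" "py c < py g"
      by simp_all
    then show "interlacing X Y g u \<and> interlacing X Y g c"
      unfolding px_def py_def by (blast intro: interlacing_if_crossing)
  qed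
  have u_c: "parallel X Y u c \<or> snd u = snd c"
  proof (cases "py u = py c")
    case True
    then show ?thesis
      using inj_onD[OF inj_on_pos[OF assms(3)]] assms(2) uC(1) c(1) unfolding py_def
      by (metis mem_Times_iff subsetD)
  next
    case False
    with uC(3) have "py u < py c" by simp
    then show ?thesis
      using parallel_if_same_order[of u X Y c] assms(2) uC(1) c(1) uc
      unfolding px_def py_def by auto
  qed
  have "inj_on px (C - P)"
    using assms(4) unfolding px_def by (rule inj_on_subset) blast
  moreover have "px ` (C - P) \<subseteq> {px u..px c}"
    using c(2) unfolding P_def px_def by auto
  ultimately have "card (C - P) \<le> card {px u..px c}"
    by (rule card_inj_on_le) simp
  with uc have rest: "card (C - P) \<le> dpath X (fst u) (fst c) + 1"
    unfolding dpath_def px_def by simp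
  show thesis
    by (rule that[OF uC(1,2) u_c crossing[unfolded P_def px_def] rest[unfolded P_def px_def]])
qed

lemma decomposable_chords:
  assumes "finite C" "C \<subseteq> set X \<times> set Y" "distinct Y" "inj_on (\<lambda>d. pos X (fst d)) C"
  shows "decomposable X Y C"
  using assms(1,2,4)
proof (induction "card C" arbitrary: C rule: less_induct)
  case less
  show ?case
  proof (cases "C = {}")
    case True
    then show ?thesis by (simp add: decomposable_empty)
  next
    case False
    obtain c where c: "c \<in> C" "\<forall>d\<in>C. pos X (fst d) \<le> pos X (fst c)"
      using Max_in[of "(\<lambda>d. pos X (fst d)) ` C"] Max_ge[of "(\<lambda>d. pos X (fst d)) ` C"]
        False less.prems(1) by fastforce
    show ?thesis
    proof (cases "\<forall>d\<in>C - {c}. pos Y (snd c) < pos Y (snd d)")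
      case True
      have "card (C - {c}) < card C"
        using less.prems(1) c(1) by (rule card_Diff1_less)
      then have "decomposable X Y (C - {c})"
        using less by (intro less.hyps) (auto intro: inj_on_subset)
      moreover have "pos X (fst d) < pos X (fst c)" if "d \<in> C" "d \<noteq> c" for d
        using c that inj_on_eq_iff[OF less.prems(3) that(1) c(1)] by fastforce
      with True have "\<forall>d\<in>C - {c}. interlacing X Y c d"
        by (auto simp: interlacing_commute intro: interlacing_if_crossing)
      ultimately show ?thesis
        using decomposable_insert_interlacing[of "C - {c}" c X Y] less.prems(1) c(1)
        by (simp add: insert_absorb)
    next
      case False
      then obtain d where d: "d \<in> C" "d \<noteq> c" "pos Y (snd d) \<le> pos Y (snd c)"
        by (auto simp: not_less)
      obtain u where u: "u \<in> C" "u \<noteq> c"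
          "parallel X Y u c \<or> snd u = snd c"
          "\<forall>g\<in>{d\<in>C. pos X (fst d) < pos X (fst u)}. interlacing X Y g u \<and> interlacing X Y g c"
          "card (C - {d\<in>C. pos X (fst d) < pos X (fst u)}) \<le> dpath X (fst u) (fst c) + 1"
        by (rule chord_pairing[OF less.prems(1,2) assms(3) less.prems(3) c d])
      have IH: "decomposable X Y {d\<in>C. pos X (fst d) < pos X (fst u)}"
        using less u(1) by (intro less.hyps) (auto intro: inj_on_subset psubset_card_mono)
      show ?thesis
        by (rule decomposable_extend_pair[OF less.prems(1) _ IH u(1) c(1) _ u(2-5)]) auto
    qed
  qed
qed

theorem lemma4p3:
  fixes E :: "'a \<Rightarrow> 'a \<Rightarrow> bool" and X Y :: "'a list" and m :: nat
  assumes "simple_graph E"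
    and "section_pair E X Y"
    and "m = card (chords E X Y)"
    and "\<forall>x \<in> set X. card {e \<in> chords E X Y. fst e = x} \<le> 1"
  shows "(\<exists>F \<subseteq> chords E X Y. 2 * card F \<ge> m \<and>
            (\<forall>e \<in> F. \<forall>f \<in> F. e \<noteq> f \<longrightarrow> interlacing X Y e f))
       \<or> (\<exists>(t::nat) (e :: nat \<Rightarrow> 'a \<times> 'a) (e' :: nat \<Rightarrow> 'a \<times> 'a).
            (\<forall>i \<in> {1..t}. e i \<in> chords E X Y \<and> e' i \<in> chords E X Y \<and> e i \<noteq> e' i) \<and>
            (\<forall>i \<in> {1..t}. parallel X Y (e i) (e' i) \<or> snd (e i) = snd (e' i)) \<and>
            (\<forall>i \<in> {1..t}. \<forall>j \<in> {1..t}. i < j \<longrightarrow>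
                interlacing X Y (e i) (e j) \<and> interlacing X Y (e i) (e' j) \<and>
                interlacing X Y (e' i) (e j) \<and> interlacing X Y (e' i) (e' j)) \<and>
            4 * (\<Sum>i = 1..t. dpath X (fst (e i)) (fst (e' i))) \<ge> m)"
proof -
  let ?C = "chords E X Y"
  have "distinct X" "distinct Y"
    using assms(2) unfolding section_pair_def is_path_def by blast+
  have C_XY: "?C \<subseteq> set X \<times> set Y"
    unfolding chords_def by auto
  then have "finite ?C"
    by (rule finite_subset) simp
  have "inj_on fst ?C"
    using \<open>finite ?C\<close> assms(4) C_XY by (intro inj_on_fst_if_fibres_le_1) auto
  moreover have "inj_on (pos X) (fst ` ?C)"
    using inj_on_pos[OF \<open>distinct X\<close>] by (rule inj_on_subset) (use C_XY in auto)
  ultimately have "inj_on (\<lambda>d. pos X (fst d)) ?C"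
    using comp_inj_on by (simp add: comp_def)
  then have "decomposable X Y ?C"
    by (rule decomposable_chords[OF \<open>finite ?C\<close> C_XY \<open>distinct Y\<close>])
  then obtain F t e e' where F: "F \<subseteq> ?C" "pairwise (interlacing X Y) F"
      and pairs: "interlaced_pairs X Y ?C t e e'"
      and bound: "m \<le> card F + (\<Sum>i = 1..t. dpath X (fst (e i)) (fst (e' i)))"
    unfolding decomposable_def assms(3) by blast
  show ?thesis
  proof (cases "m \<le> 2 * card F")
    case True
    then show ?thesis
      using F by (intro disjI1 exI[of _ F]) (simp add: pairwise_def)
  next
    case False
    then have "m \<le> 4 * (\<Sum>i = 1..t. dpath X (fst (e i)) (fst (e' i)))"
      using bound by linarith
    with pairs have "interlaced_pairs X Y ?C t e e' \<and>
        m \<le> 4 * (\<Sum>i = 1..t. dpath X (fst (e i)) (fst (e' i)))" ..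
    then show ?thesis
      unfolding interlaced_pairs_def conj_assoc by (intro disjI2 exI)
  qed
qed

end
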